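(* Let $P$ be a polygon with vertex set $V$ and a non-empty dissection $D$, and let $d=\{\zeta,\eta\}\in D$ be such that $D = \{d\}\cup D_2$ where $D_2$ is a dissection of the subpolygon $P_2$ with vertex set $V_2 = \{\varepsilon \in V : \eta \le \varepsilon \le \zeta\}$ (so no diagonal of $D$ has an end point strictly between $\zeta$ and $\eta$). If $\alpha \neq \beta$ are in $V_2$, then $\mathcal{T}_{P,D}(\alpha,\beta) = \mathcal{T}_{P_2,D_2}(\alpha,\beta)$.
   Context: A polygon $P$ is a finite set $V$ of at least three vertices with a cyclic order, pictured as a convex polygon in the plane with vertices anticlockwise. For vertices $a,b$, "$a \le \varepsilon \le b$" means $\varepsilon$ lies on the cyclic interval from $a$ to $b$ traversed in the positive cyclic direction, endpoints included ("$<$" excludes the endpoint). A subpolygon is a subset of $V$ of at least three vertices with the induced cyclic order. A diagonal is a two-element subset of the vertex set (edges included); non-edges are internal. Two diagonals cross if they consist of four distinct vertices $\alpha,\beta,\gamma,\delta$ appearing cyclically as $\alpha,\gamma,\beta,\delta$ or $\alpha,\delta,\beta,\gamma$. A dissection is a set of pairwise non-crossing internal diagonals. For vertices $\pi_1\neq\pi_p$, a $T$-path from $\pi_1$ to $\pi_p$ w.r.t. a dissection $D$ of a polygon $Q$ is a tuple $(\pi_1,\dots,\pi_p)$ of vertices of $Q$ with: (i) $\{\pi_1,\pi_2\},\dots,\{\pi_{p-1},\pi_p\}$ pairwise different diagonals; (ii) no $\{\pi_i,\pi_{i+1}\}$ crosses a diagonal of $D$; (iii) each $\{\pi_{2j},\pi_{2j+1}\}$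 lies in $D$, and these cross the segment $\{\pi_1,\pi_p\}$ at pairwise different points progressing monotonically from $\pi_1$ to $\pi_p$. $\mathcal{T}_{Q,D}(\alpha,\beta)$ denotes the set of such paths from $\alpha$ to $\beta$. *)

theory Defs
  imports Main
begin

text \<open>Polygons are modelled as finite sets of vertices of a linearly ordered type;
the cyclic (anticlockwise) order is the one induced by the linear order, closing up
from the largest vertex back to the smallest. Subpolygons carry the induced order.\<close>

definition polygon :: "'a::linorder set \<Rightarrow> bool" where
  "polygon V \<longleftrightarrow> finite V \<and> card V \<ge> 3"

text \<open>cyc_le a e b: e lies on the cyclic interval from a to b traversed in the positive
direction, endpoints included.\<close>
definition cyc_le :: "'a::linorder \<Rightarrow> 'a \<Rightarrow> 'a \<Rightarrow> bool" where
  "cyc_le a e b \<longleftrightarrow> (if a \<le> b then a \<le> e \<and> e \<le> b else a \<le> e \<or> e \<le> b)"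

definition diagonal :: "'a::linorder set \<Rightarrow> 'a set \<Rightarrow> bool" where
  "diagonal V d \<longleftrightarrow> d \<subseteq> V \<and> card d = 2"

text \<open>An edge joins two cyclically consecutive vertices of V.\<close>
definition is_edge :: "'a::linorder set \<Rightarrow> 'a set \<Rightarrow> bool" where
  "is_edge V d \<longleftrightarrow> diagonal V d \<and>
     ((\<forall>v\<in>V. \<not> (Min d < v \<and> v < Max d)) \<or> (\<forall>v\<in>V. Min d \<le> v \<and> v \<le> Max d))"

definition internal :: "'a::linorder set \<Rightarrow> 'a set \<Rightarrow> bool" where
  "internal V d \<longleftrightarrow> diagonal V d \<and> \<not> is_edge V d"

text \<open>Four distinct vertices w < x < y < z appear cyclically as w,x,y,z; the diagonals
{w,y} and {x,z} cross, and these are the only crossing configurations.\<close>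
definition crosses :: "'a::linorder set \<Rightarrow> 'a set \<Rightarrow> bool" where
  "crosses d1 d2 \<longleftrightarrow> (\<exists>w x y z. w < x \<and> x < y \<and> y < z \<and>
     ((d1 = {w, y} \<and> d2 = {x, z}) \<or> (d1 = {x, z} \<and> d2 = {w, y})))"

definition dissection :: "'a::linorder set \<Rightarrow> 'a set set \<Rightarrow> bool" where
  "dissection V D \<longleftrightarrow> (\<forall>d\<in>D. internal V d) \<and> (\<forall>d1\<in>D. \<forall>d2\<in>D. \<not> crosses d1 d2)"

definition inside :: "'a::linorder set \<Rightarrow> 'a \<Rightarrow> bool" where
  "inside c v \<longleftrightarrow> Min c < v \<and> v < Max c"

text \<open>For chords c, c' crossing a segment towards the vertex b: the crossing point of c'
comes strictly after that of c (in direction of b) iff c \<noteq> c' and c' lies in the closed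
half of the polygon cut by c containing b.\<close>
definition crosses_before :: "'a::linorder set \<Rightarrow> 'a set \<Rightarrow> 'a \<Rightarrow> bool" where
  "crosses_before c c' b \<longleftrightarrow> c \<noteq> c' \<and> (\<forall>v\<in>c'. v \<in> c \<or> (inside c v \<longleftrightarrow> inside c b))"

definition step :: "'a list \<Rightarrow> nat \<Rightarrow> 'a set" where
  "step pi k = {pi ! k, pi ! Suc k}"

text \<open>T-paths: list pi = [pi_1,...,pi_p]; step k (0-based) is {pi_(k+1), pi_(k+2)},
so the steps {pi_2j, pi_2j+1} are exactly the steps with odd index k.\<close>
definition Tpath :: "'a::linorder set \<Rightarrow> 'a set set \<Rightarrow> 'a \<Rightarrow> 'a \<Rightarrow> 'a list \<Rightarrow> bool" where
  "Tpath Q D a b pi \<longleftrightarrow>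
     pi \<noteq> [] \<and> hd pi = a \<and> last pi = b \<and> a \<noteq> b \<and> set pi \<subseteq> Q \<and>
     (\<forall>k < length pi - 1. diagonal Q (step pi k)) \<and>
     (\<forall>k < length pi - 1. \<forall>k' < length pi - 1. k \<noteq> k' \<longrightarrow> step pi k \<noteq> step pi k') \<and>
     (\<forall>k < length pi - 1. \<forall>d\<in>D. \<not> crosses (step pi k) d) \<and>
     (\<forall>k < length pi - 1. odd k \<longrightarrow> step pi k \<in> D \<and> crosses (step pi k) {a, b}) \<and>
     (\<forall>k < length pi - 1. \<forall>k' < length pi - 1. odd k \<and> odd k' \<and> k < k' \<longrightarrow>
         crosses_before (step pi k) (step pi k') b)"

definition Tpaths :: "'a::linorder set \<Rightarrow> 'a set set \<Rightarrow> 'a \<Rightarrow> 'a \<Rightarrow> 'a list set" where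
  "Tpaths Q D a b = {pi. Tpath Q D a b pi}"

end

theory Submission
  imports Defs
begin

text \<open>Every vertex of a T-path is an end point or lies on a diagonal of D, and all
diagonals of D lie in P2; so T-paths of P live in P2. There the diagonal
{\<zeta>, \<eta>} is crossed by no chord of P2: it obstructs no step, and it cannot serve
as a step crossing {\<alpha>, \<beta>}. Hence adding it to D2 changes nothing.\<close>

lemma crosses_commute: "crosses d1 d2 \<longleftrightarrow> crosses d2 d1"
  unfolding crosses_def by blast

lemma not_crosses_cyc_interval:
  assumes "cyc_le \<eta> a \<zeta>" "cyc_le \<eta> b \<zeta>"
  shows "\<not> crosses {\<zeta>, \<eta>} {a, b}"
  using assms unfolding crosses_def cyc_le_def
  by (auto simp: doubleton_eq_iff split: if_splits)

lemma dissection_Union_subset: "dissection V D \<Longrightarrow> \<Union>D \<subseteq> V"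
  unfolding dissection_def internal_def diagonal_def by blast

lemma step_subset_set: "k < length pi - 1 \<Longrightarrow> step pi k \<subseteq> set pi"
  unfolding step_def by simp

lemma Tpath_set_subset:
  assumes "Tpath Q D a b pi"
  shows "set pi \<subseteq> insert a (insert b (\<Union>D))"
proof
  fix v assume "v \<in> set pi"
  then obtain i where i: "i < length pi" "v = pi ! i" by (metis in_set_conv_nth)
  consider "i = 0" | "i = length pi - 1" | "odd i" "i < length pi - 1"
    | "odd (i - 1)" "i - 1 < length pi - 1" "Suc (i - 1) = i"
    using i(1) by (cases "odd i"; cases "i = 0"; cases "i = length pi - 1") auto
  then show "v \<in> insert a (insert b (\<Union>D))"
  proof cases
    case 1
    then have "v = hd pi" using i by (simp add: hd_conv_nth)
    then show ?thesis using assms unfolding Tpath_def by simp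
  next
    case 2
    then have "v = last pi" using i by (metis last_conv_nth list.size(3) not_less0)
    then show ?thesis using assms unfolding Tpath_def by simp
  next
    case 3
    then have "step pi i \<in> D" using assms unfolding Tpath_def by blast
    then show ?thesis using i unfolding step_def by blast
  next
    case 4
    then have "step pi (i - 1) \<in> D" using assms unfolding Tpath_def by blast
    then show ?thesis using i \<open>Suc (i - 1) = i\<close> unfolding step_def by (metis UnionI insertCI)
  qed
qed

lemma Tpath_restrict_polygon:
  assumes "set pi \<subseteq> Q'" "Q' \<subseteq> Q"
  shows "Tpath Q D a b pi \<longleftrightarrow> Tpath Q' D a b pi"
proof -
  have "diagonal Q (step pi k) \<longleftrightarrow> diagonal Q' (step pi k)" if "k < length pi - 1" for k
    using that assms unfolding diagonal_def step_def by auto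
  then show ?thesis using assms unfolding Tpath_def by auto
qed

lemma Tpath_insert_noncrossing:
  assumes "\<not> crosses c {a, b}" "\<forall>k < length pi - 1. \<not> crosses (step pi k) c"
  shows "Tpath Q (insert c D) a b pi \<longleftrightarrow> Tpath Q D a b pi"
proof -
  have "step pi k \<noteq> c" if "crosses (step pi k) {a, b}" for k
    using that assms(1) by auto
  then show ?thesis using assms(2) unfolding Tpath_def by blast
qed

theorem lemma3p4:
  fixes V V2 :: "'a::linorder set" and D D2 :: "'a set set" and \<zeta> \<eta> \<alpha> \<beta> :: 'a
  assumes "polygon V"
    and "dissection V D"
    and "D \<noteq> {}"
    and "\<zeta> \<in> V" and "\<eta> \<in> V"
    and "{\<zeta>, \<eta>} \<in> D"
    and "V2 = {\<epsilon> \<in> V. cyc_le \<eta> \<epsilon> \<zeta>}"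
    and "polygon V2"
    and "dissection V2 D2"
    and "D = insert {\<zeta>, \<eta>} D2"
    and "\<alpha> \<in> V2" and "\<beta> \<in> V2" and "\<alpha> \<noteq> \<beta>"
  shows "Tpaths V D \<alpha> \<beta> = Tpaths V2 D2 \<alpha> \<beta>"
proof -
  have V2_sub: "V2 \<subseteq> V" using assms(7) by blast
  have chord_sub: "\<Union>D \<subseteq> V2"
    using dissection_Union_subset[OF assms(9)] assms(4,5,7,10) by (auto simp: cyc_le_def)
  have no_cross: "\<not> crosses {\<zeta>, \<eta>} {x, y}" if "x \<in> V2" "y \<in> V2" for x y
    using not_crosses_cyc_interval that assms(7) by blast
  have "Tpath V D \<alpha> \<beta> pi \<longleftrightarrow> Tpath V2 D2 \<alpha> \<beta> pi" for pi
  proof (cases "set pi \<subseteq> V2")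
    case True
    have "\<not> crosses (step pi k) {\<zeta>, \<eta>}" if "k < length pi - 1" for k
    proof -
      have "{pi ! k, pi ! Suc k} \<subseteq> V2"
        using step_subset_set[OF that] True unfolding step_def by blast
      then show ?thesis using no_cross crosses_commute unfolding step_def by (metis insert_subset)
    qed
    then have "Tpath V2 D \<alpha> \<beta> pi \<longleftrightarrow> Tpath V2 D2 \<alpha> \<beta> pi"
      using Tpath_insert_noncrossing no_cross assms(10,11,12) by blast
    then show ?thesis using Tpath_restrict_polygon[OF True V2_sub] by blast
  next
    case False
    then show ?thesis
      using Tpath_set_subset[of V D \<alpha> \<beta> pi] chord_sub assms(11,12)
      unfolding Tpath_def by blast
  qed
  then show ?thesis unfolding Tpaths_def by blast
qed

end
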